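(* Let $t_0>0$, $q>0$, let $\lambda:[t_0,+\infty[\to\,]0,+\infty[$ be continuous and let $\tau(t)=\frac{1}{q^q}\big(t_0+\int_{t_0}^t[\lambda(r)]^{1/q}dr\big)^q$ for $t\ge t_0$. Suppose there exist $C_0>0$ and real numbers $b>a\ge 0$ such that $$\int_{t_0}^t[\tau(r)]^a[\lambda(r)]^{-b}\,dr\le C_0\qquad\forall t\ge t_0 .$$ Then there exists $C_1>0$ such that $\tau(t)\ge C_1(t-t_0)^{\frac{qb+1}{b-a}}$ for all $t\ge t_0$. *)

theory Defs
  imports "HOL-Analysis.Analysis"
begin

end

theory Submission
  imports Defs
begin

text \<open>
  Put L(t) = t0 + \<integral>[t0,t] \<lambda>^(1/q), so that \<tau> = (L/q)^q and L' = \<lambda>^(1/q).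
  For \<theta> = 1/(qb+1) the weighted geometric mean (\<tau>^a \<lambda>^(-b))^\<theta> (L^(-a/b) L')^(1-\<theta>)
  is constant, since the powers of \<lambda> and of L cancel. Hoelder's inequality on [t0,t]
  therefore bounds t - t0 by a constant times C0^\<theta> (\<integral> L^(-a/b) L')^(1-\<theta>), and the
  last integral is at most b/(b-a) L(t)^((b-a)/b). Hence t - t0 is at most a constant
  times L(t)^(q(b-a)/(qb+1)), and solving for L(t)^q gives the growth of \<tau>.
\<close>

lemma Holder_integral_powr_mult_le:
  fixes f g :: "'a::euclidean_space \<Rightarrow> real"
  assumes f: "f integrable_on S" and g: "g integrable_on S"
    and fg: "(\<lambda>x. f x powr \<theta> * g x powr (1 - \<theta>)) integrable_on S"
    and f_nonneg: "\<And>x. x \<in> S \<Longrightarrow> 0 \<le> f x" and g_nonneg: "\<And>x. x \<in> S \<Longrightarrow> 0 \<le> g x"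
    and \<theta>: "0 < \<theta>" "\<theta> < 1"
    and A: "integral S f \<le> A" "0 < A" and B: "integral S g \<le> B" "0 < B"
  shows "integral S (\<lambda>x. f x powr \<theta> * g x powr (1 - \<theta>)) \<le> A powr \<theta> * B powr (1 - \<theta>)"
proof -
  define M where "M = A powr \<theta> * B powr (1 - \<theta>)"
  have M_pos: "0 < M" unfolding M_def using A B by simp
  have young: "f x powr \<theta> * g x powr (1 - \<theta>) \<le> M * \<theta> / A * f x + M * (1 - \<theta>) / B * g x"
    if "x \<in> S" for x
  proof (cases "f x = 0 \<or> g x = 0")
    case True
    then show ?thesis
      using that \<theta> A B M_pos f_nonneg g_nonneg by (auto intro!: mult_nonneg_nonneg add_nonneg_nonneg)
  next
    case False
    then have "(f x / A) powr \<theta> * (g x / B) powr (1 - \<theta>) \<le> \<theta> * (f x / A) + (1 - \<theta>) * (g x / B)"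
      using that \<theta> A B f_nonneg[of x] g_nonneg[of x] by (intro Youngs_inequality_0) auto
    then show ?thesis
      using that A B M_pos f_nonneg[of x] g_nonneg[of x]
      by (simp add: M_def powr_divide field_simps)
  qed
  have "integral S (\<lambda>x. f x powr \<theta> * g x powr (1 - \<theta>))
      \<le> integral S (\<lambda>x. M * \<theta> / A * f x + M * (1 - \<theta>) / B * g x)"
    using f g fg young by (intro integral_le integrable_add integrable_on_mult_right) auto
  also have "\<dots> = M * \<theta> / A * integral S f + M * (1 - \<theta>) / B * integral S g"
    by (simp only: integral_add[OF integrable_on_mult_right[OF f] integrable_on_mult_right[OF g]]
        integral_mult_right)
  also have "\<dots> \<le> M * \<theta> / A * A + M * (1 - \<theta>) / B * B"
    using A B \<theta> M_pos by (intro add_mono mult_left_mono) auto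
  also have "\<dots> = M"
    using A B by (simp add: field_simps)
  finally show ?thesis unfolding M_def .
qed

lemma powr_chain_has_integral:
  fixes L g :: "real \<Rightarrow> real"
  assumes "s \<le> t" "p \<noteq> 0"
    and L_deriv: "\<And>r. r \<in> {s..t} \<Longrightarrow> (L has_real_derivative g r) (at r within {s..t})"
    and L_pos: "\<And>r. r \<in> {s..t} \<Longrightarrow> 0 < L r"
  shows "((\<lambda>r. L r powr (p - 1) * g r) has_integral (L t powr p - L s powr p) / p) {s..t}"
proof -
  have "((\<lambda>r. L r powr p / p) has_real_derivative L r powr (p - 1) * g r) (at r within {s..t})"
    if "r \<in> {s..t}" for r
    using DERIV_cdivide[OF DERIV_chain2[OF has_real_derivative_powr[where r=p, OF L_pos[OF that]]
        L_deriv[OF that]], where c=p] \<open>p \<noteq> 0\<close>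
    by simp
  then have "((\<lambda>r. L r powr (p - 1) * g r) has_integral L t powr p / p - L s powr p / p) {s..t}"
    by (intro fundamental_theorem_of_calculus \<open>s \<le> t\<close>)
       (simp add: has_real_derivative_iff_has_vector_derivative[symmetric])
  then show ?thesis by (simp add: diff_divide_distrib)
qed

lemma weighted_geometric_mean_eq:
  fixes q a b x y :: real
  assumes "0 < q" "0 < b" "0 < x" "0 < y"
  shows "(((1 / q powr q) * x powr q) powr a * y powr (- b)) powr (1 / (q * b + 1))
       * (x powr (- a / b) * y powr (1 / q)) powr (q * b / (q * b + 1))
       = q powr (- q * a / (q * b + 1))"
    (is "?lhs = ?rhs")
proof -
  have "ln ?lhs = (a * q * (ln x - ln q) - b * ln y + q * b * (ln y / q - a / b * ln x)) / (q * b + 1)"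
    using assms
    by (simp add: ln_mult ln_powr ln_div add_divide_distrib diff_divide_distrib right_diff_distrib)
  also have "\<dots> = - q * a * ln q / (q * b + 1)"
    using assms by (simp add: algebra_simps)
  also have "\<dots> = ln ?rhs"
    using assms by (simp add: ln_powr)
  finally show ?thesis
    using assms by (subst ln_inj_iff[symmetric]) auto
qed

lemma primitive_growth_bound:
  fixes lam L :: "real \<Rightarrow> real" and q a b C0 t0 t :: real
  assumes q: "0 < q" and ab: "0 \<le> a" "a < b" and C0: "0 < C0" and "t0 \<le> t"
    and lam_cont: "continuous_on {t0..t} lam"
    and lam_pos: "\<And>r. r \<in> {t0..t} \<Longrightarrow> 0 < lam r"
    and L_deriv: "\<And>r. r \<in> {t0..t} \<Longrightarrow>
        (L has_real_derivative lam r powr (1 / q)) (at r within {t0..t})"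
    and L_pos: "\<And>r. r \<in> {t0..t} \<Longrightarrow> 0 < L r"
    and bound: "integral {t0..t} (\<lambda>r. ((1 / q powr q) * L r powr q) powr a * lam r powr (- b)) \<le> C0"
  shows "q powr (- q * a / (q * b + 1)) * (t - t0)
       \<le> C0 powr (1 / (q * b + 1)) * (b / (b - a)) powr (q * b / (q * b + 1))
         * L t powr (q * (b - a) / (q * b + 1))"
proof -
  have b: "0 < b"
    using ab by linarith
  have d: "0 < q * b + 1"
    using q b by (simp add: add_pos_pos)
  define \<theta> where "\<theta> = 1 / (q * b + 1)"
  have \<theta>: "0 < \<theta>" "\<theta> < 1" "1 - \<theta> = q * b / (q * b + 1)"
    unfolding \<theta>_def using q b d by (auto simp: field_simps)
  define f where "f r = ((1 / q powr q) * L r powr q) powr a * lam r powr (- b)" for r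
  define h where "h r = L r powr (- a / b) * lam r powr (1 / q)" for r
  define p where "p = (b - a) / b"
  have p: "0 < p" "p - 1 = - a / b"
    unfolding p_def using ab b by (auto simp: field_simps)
  have L_cont: "continuous_on {t0..t} L"
    using L_deriv by (rule DERIV_continuous_on)
  have f_int: "f integrable_on {t0..t}"
    unfolding f_def using L_pos lam_pos q
    by (intro integrable_continuous_interval continuous_intros L_cont lam_cont continuous_on_powr)
       (fastforce dest: L_pos lam_pos)+
  have h_has_int: "(h has_integral (L t powr p - L t0 powr p) / p) {t0..t}"
    using powr_chain_has_integral[OF \<open>t0 \<le> t\<close> _ L_deriv L_pos, of p] p unfolding h_def by simp
  have h_le: "integral {t0..t} h \<le> L t powr p / p"
    using integral_unique[OF h_has_int] p by (simp add: diff_divide_distrib)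
  have mean_eq: "f r powr \<theta> * h r powr (1 - \<theta>) = q powr (- q * a / (q * b + 1))"
    if "r \<in> {t0..t}" for r
    using weighted_geometric_mean_eq[OF q b L_pos[OF that] lam_pos[OF that]] \<theta>(3)
    unfolding f_def h_def \<theta>_def by simp
  have "q powr (- q * a / (q * b + 1)) * (t - t0)
      = integral {t0..t} (\<lambda>_. q powr (- q * a / (q * b + 1)))"
    using \<open>t0 \<le> t\<close> by simp
  also have "\<dots> = integral {t0..t} (\<lambda>r. f r powr \<theta> * h r powr (1 - \<theta>))"
    using mean_eq by (intro integral_cong) simp
  also have "\<dots> \<le> C0 powr \<theta> * (L t powr p / p) powr (1 - \<theta>)"
  proof (rule Holder_integral_powr_mult_le[OF f_int has_integral_integrable[OF h_has_int]])
    show "(\<lambda>r. f r powr \<theta> * h r powr (1 - \<theta>)) integrable_on {t0..t}"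
      by (rule integrable_eq[of "\<lambda>_. q powr (- q * a / (q * b + 1))"]) (auto simp: mean_eq)
  qed (use \<theta> C0 p h_le bound[folded f_def[abs_def]] L_pos[of t] \<open>t0 \<le> t\<close> in \<open>auto simp: f_def h_def\<close>)
  also have "\<dots> = C0 powr \<theta> * (1 / p) powr (1 - \<theta>) * L t powr (p * (1 - \<theta>))"
    using p L_pos[of t] \<open>t0 \<le> t\<close> by (simp add: powr_divide powr_powr)
  also have "1 / p = b / (b - a)"
    unfolding p_def by simp
  also have "p * (1 - \<theta>) = q * (b - a) / (q * b + 1)"
    unfolding p_def \<theta>(3) using b by simp
  finally show ?thesis
    unfolding \<theta>_def \<theta>(3)[unfolded \<theta>_def] .
qed

lemma powr_le_mult_powr_imp_powr_le:
  fixes c K e x y q :: real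
  assumes "0 < c" "0 < K" "0 < e" "0 \<le> x" "0 < y"
    and "c * x \<le> K * y powr (q / e)"
  shows "(c / K) powr e * x powr e \<le> y powr q"
proof -
  have "(c / K) powr e * x powr e = (c / K * x) powr e"
    using assms by (simp add: powr_mult[symmetric])
  also have "\<dots> \<le> (y powr (q / e)) powr e"
    using assms by (intro powr_mono2) (auto simp: field_simps)
  also have "\<dots> = y powr q"
    using assms by (simp add: powr_powr)
  finally show ?thesis .
qed

lemma offset_primitive:
  fixes g :: "real \<Rightarrow> real"
  assumes "0 < t0" "continuous_on {t0..t} g" "\<And>r. r \<in> {t0..t} \<Longrightarrow> 0 \<le> g r" "r \<in> {t0..t}"
  shows "((\<lambda>s. t0 + integral {t0..s} g) has_real_derivative g r) (at r within {t0..t})"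
    and "0 < t0 + integral {t0..r} g"
proof -
  show "((\<lambda>s. t0 + integral {t0..s} g) has_real_derivative g r) (at r within {t0..t})"
    using DERIV_add[OF DERIV_const integral_has_real_derivative[OF assms(2,4)]] by simp
  have "continuous_on {t0..r} g"
    using assms(2) by (rule continuous_on_subset) (use assms(4) in auto)
  then have "0 \<le> integral {t0..r} g"
    using assms(3,4) by (intro integral_nonneg integrable_continuous_interval) auto
  then show "0 < t0 + integral {t0..r} g"
    using assms(1) by simp
qed

theorem mainTheorem2:
  fixes t0 q a b C0 :: real and lam tau :: "real \<Rightarrow> real"
  assumes t0_pos: "t0 > 0" and q_pos: "q > 0"
    and lam_cont: "continuous_on {t0..} lam"
    and lam_pos: "\<And>t. t \<ge> t0 \<Longrightarrow> lam t > 0"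
    and tau_def: "\<And>t. t \<ge> t0 \<Longrightarrow>
        tau t = (1 / q powr q) * (t0 + integral {t0..t} (\<lambda>r. lam r powr (1 / q))) powr q"
    and C0_pos: "C0 > 0" and ab: "0 \<le> a" "a < b"
    and bound: "\<And>t. t \<ge> t0 \<Longrightarrow>
        integral {t0..t} (\<lambda>r. tau r powr a * lam r powr (- b)) \<le> C0"
  shows "\<exists>C1 > 0. \<forall>t \<ge> t0. tau t \<ge> C1 * (t - t0) powr ((q * b + 1) / (b - a))"
proof -
  define L where "L t = t0 + integral {t0..t} (\<lambda>r. lam r powr (1 / q))" for t
  define e where "e = (q * b + 1) / (b - a)"
  define c where "c = q powr (- q * a / (q * b + 1))"
  define K where "K = C0 powr (1 / (q * b + 1)) * (b / (b - a)) powr (q * b / (q * b + 1))"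
  have e: "0 < e" "q * (b - a) / (q * b + 1) = q / e"
    unfolding e_def using q_pos ab by (auto simp: add_pos_pos)
  have cK: "0 < c" "0 < K"
    unfolding c_def K_def using q_pos C0_pos ab by auto
  have growth: "c * (t - t0) \<le> K * L t powr (q / e) \<and> 0 < L t" if "t0 \<le> t" for t
  proof -
    have lam_cont_t: "continuous_on {t0..t} lam"
      using lam_cont by (rule continuous_on_subset) auto
    then have g_cont: "continuous_on {t0..t} (\<lambda>r. lam r powr (1 / q))"
      using lam_pos by (intro continuous_intros continuous_on_powr) (auto, fastforce)
    have L_deriv: "(L has_real_derivative lam r powr (1 / q)) (at r within {t0..t})"
      and L_pos: "0 < L r" if "r \<in> {t0..t}" for r
      using offset_primitive[OF t0_pos g_cont _ that] unfolding L_def[abs_def] by auto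
    have "integral {t0..t} (\<lambda>r. tau r powr a * lam r powr (- b))
        = integral {t0..t} (\<lambda>r. ((1 / q powr q) * L r powr q) powr a * lam r powr (- b))"
      by (rule integral_cong) (simp add: tau_def L_def)
    then show ?thesis
      using primitive_growth_bound[OF q_pos ab C0_pos that lam_cont_t _ L_deriv L_pos] L_pos[of t]
        bound[OF that] lam_pos e(2) that
      unfolding c_def K_def by simp
  qed
  show ?thesis
  proof (intro exI[of _ "(c / K) powr e / q powr q"] conjI allI impI)
    fix t assume "t0 \<le> t"
    then have "(c / K) powr e * (t - t0) powr e \<le> L t powr q"
      using powr_le_mult_powr_imp_powr_le[OF cK e(1)] growth by simp
    then show "tau t \<ge> (c / K) powr e / q powr q * (t - t0) powr ((q * b + 1) / (b - a))"
      using tau_def[OF \<open>t0 \<le> t\<close>] q_pos unfolding L_def e_def by (simp add: divide_right_mono)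
  qed (use cK q_pos in simp)
qed

end
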